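(* Let $r\ge 1$ be an integer. For integers $n,k\ge 0$ let $C(n,k,r)$ be the number of compositions of $n$ into $k$ positive parts that have no run of length $\ge r$ (with $C(0,0,r)=1$ counting the empty composition). Then, as formal power series in $x,q$, \[\sum_{n,k\ge 0}C(n,k,r)\,x^nq^k=\frac{1}{1-\frac{xq}{1-x}+q^r\sum_{j\ge 1}\frac{x^{rj}(1-qx^j)}{1-q^rx^{rj}}}.\]
   Context: A composition of $n$ into $k$ parts is an ordered sequence $(a_1,\dots,a_k)$ of positive integers with $a_1+\dots+a_k=n$. A run in a composition is a maximal string of consecutive identical parts; its length is the number of parts in it. For example, $28=3+5+5+5+3+3+4$ has run lengths $1,3,2,1$. *)

theory Defs
  imports "HOL-Computational_Algebra.Formal_Laurent_Series"
begin

function run_lengths :: "'a list \<Rightarrow> nat list" where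
  "run_lengths [] = []"
| "run_lengths (x # xs) =
     Suc (length (takeWhile (\<lambda>y. y = x) xs)) # run_lengths (dropWhile (\<lambda>y. y = x) xs)"
  by pat_completeness auto
termination
  by (relation "measure length") (auto simp: le_imp_less_Suc length_dropWhile_le)

definition compositions :: "nat \<Rightarrow> nat \<Rightarrow> nat list set" where
  "compositions n k = {xs. length xs = k \<and> (\<forall>a\<in>set xs. 0 < a) \<and> sum_list xs = n}"

definition C :: "nat \<Rightarrow> nat \<Rightarrow> nat \<Rightarrow> nat" where
  "C n k r = card {xs \<in> compositions n k. \<forall>l\<in>set (run_lengths xs). l < r}"

(* Bivariate formal power series in x and q are represented as power series in x
   whose coefficients are formal Laurent series in q over the rationals
   (Q[[x,q]] embeds injectively into Q((q))[[x]]); this makes the coefficient ring a field. *)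
definition xx :: "rat fls fps" where "xx = fps_X"
definition qq :: "rat fls fps" where "qq = fps_const fls_X"

definition GF :: "nat \<Rightarrow> rat fls fps" where
  "GF r = Abs_fps (\<lambda>n. Abs_fls (\<lambda>k::int. if 0 \<le> k then of_nat (C n (nat k) r) else 0))"

(* the denominator  1 - xq/(1-x) + q^r sum_{j>=1} x^{rj}(1 - q x^j)/(1 - q^r x^{rj});
   the sum over j converges in the x-adic topology of power series *)
definition Den :: "nat \<Rightarrow> rat fls fps" where
  "Den r = 1 - xx * qq * inverse (1 - xx)
     + qq ^ r * (\<Sum>j. xx ^ (r * Suc j) * (1 - qq * xx ^ Suc j) * inverse (1 - qq ^ r * xx ^ (r * Suc j)))"

end

theory Submission
  imports Defs
begin

text \<open>
  Write G for the generating function and W_a (\<open>GF_from r a\<close>) for the part of it that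
  counts compositions with first part a. Deleting the first part of such a composition
  leaves one whose leading run of a's is shorter than r - 1; the remaining compositions,
  those with leading run exactly r - 1, are a^(r-1) followed by a composition not starting
  with a. Hence W_a = q x^a G - q^r x^(ra) (G - W_a), that is W_a = S_a G with
  S_a = (q x^a - q^r x^(ra)) / (1 - q^r x^(ra)) (\<open>part_factor r a\<close>). Summing over a gives
  G = 1 + G (S_1 + S_2 + ...), and 1 - (S_1 + S_2 + ...) is the stated denominator because
  q x^a - S_a = q^r x^(ra) (1 - q x^a) / (1 - q^r x^(ra)).
\<close>

abbreviation lead_run :: "'a \<Rightarrow> 'a list \<Rightarrow> nat" where
  "lead_run a w \<equiv> length (takeWhile (\<lambda>y. y = a) w)"

lemma replicate_lead_run_append_dropWhile:
  "replicate (lead_run a w) a @ dropWhile (\<lambda>y. y = a) w = w"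
proof -
  have "replicate (lead_run a w) a = takeWhile (\<lambda>y. y = a) w"
    by (rule replicate_length_same) (auto dest: set_takeWhileD)
  then show ?thesis by simp
qed

lemma dropWhile_eq_Nil_or_hd_neq:
  "dropWhile (\<lambda>y. y = a) w = [] \<or> hd (dropWhile (\<lambda>y. y = a) w) \<noteq> a"
  using hd_dropWhile[of "\<lambda>y. y = a" w] by blast

lemma takeWhile_dropWhile_replicate_append:
  assumes "z = [] \<or> hd z \<noteq> a"
  shows "takeWhile (\<lambda>y. y = a) (replicate m a @ z) = replicate m a"
    and "dropWhile (\<lambda>y. y = a) (replicate m a @ z) = z"
  using assms by (induction m) (cases z; auto)+

lemma run_lengths_replicate_append:
  assumes "0 < m" "z = [] \<or> hd z \<noteq> a"
  shows "run_lengths (replicate m a @ z) = m # run_lengths z"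
  using assms takeWhile_dropWhile_replicate_append[OF assms(2), of "m - 1"]
  by (cases m) auto

lemma run_lengths_by_lead_run:
  "run_lengths w =
    (if 0 < lead_run a w then [lead_run a w] else []) @ run_lengths (dropWhile (\<lambda>y. y = a) w)"
  using run_lengths_replicate_append[OF _ dropWhile_eq_Nil_or_hd_neq, of "lead_run a w" a w]
    replicate_lead_run_append_dropWhile[of a w]
  by (cases "0 < lead_run a w") auto

definition short_runs :: "nat \<Rightarrow> 'a list \<Rightarrow> bool" where
  "short_runs r xs \<longleftrightarrow> (\<forall>l\<in>set (run_lengths xs). l < r)"

lemma short_runs_by_lead_run:
  "short_runs r w \<longleftrightarrow>
    (0 < lead_run a w \<longrightarrow> lead_run a w < r) \<and> short_runs r (dropWhile (\<lambda>y. y = a) w)"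
  unfolding short_runs_def by (subst run_lengths_by_lead_run[of w a]) auto

lemma short_runs_Cons:
  "short_runs r (a # w) \<longleftrightarrow> short_runs r w \<and> Suc (lead_run a w) < r"
  using short_runs_by_lead_run[of r w a] by (auto simp: short_runs_def)

lemma short_runs_replicate_append:
  assumes "0 < m" "z = [] \<or> hd z \<noteq> a"
  shows "short_runs r (replicate m a @ z) \<longleftrightarrow> m < r \<and> short_runs r z"
  using run_lengths_replicate_append[OF assms] by (simp add: short_runs_def)

lemma short_runs_full_lead_run:
  assumes "1 \<le> r"
  shows "short_runs r w \<and> \<not> Suc (lead_run a w) < r \<longleftrightarrow>
    (\<exists>z. w = replicate (r - 1) a @ z \<and> (z = [] \<or> hd z \<noteq> a) \<and> short_runs r z)"
proof
  assume w: "short_runs r w \<and> \<not> Suc (lead_run a w) < r"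
  then have "lead_run a w = r - 1"
    using short_runs_by_lead_run[of r w a] assms by (cases "lead_run a w = 0") auto
  then show "\<exists>z. w = replicate (r - 1) a @ z \<and> (z = [] \<or> hd z \<noteq> a) \<and> short_runs r z"
    using w replicate_lead_run_append_dropWhile[of a w] dropWhile_eq_Nil_or_hd_neq[of a w]
      short_runs_by_lead_run[of r w a]
    by (intro exI[of _ "dropWhile (\<lambda>y. y = a) w"]) auto
next
  assume "\<exists>z. w = replicate (r - 1) a @ z \<and> (z = [] \<or> hd z \<noteq> a) \<and> short_runs r z"
  then obtain z where "w = replicate (r - 1) a @ z" "z = [] \<or> hd z \<noteq> a" "short_runs r z"
    by blast
  then show "short_runs r w \<and> \<not> Suc (lead_run a w) < r"
    using assms short_runs_replicate_append[of "r - 1" z a r]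
      takeWhile_dropWhile_replicate_append(1)[of z a "r - 1"]
    by (cases "r = 1") auto
qed

lemma finite_compositions: "finite (compositions n k)"
proof (rule finite_subset)
  show "compositions n k \<subseteq> {xs. set xs \<subseteq> {0..n} \<and> length xs = k}"
    by (auto simp: compositions_def member_le_sum_list)
  show "finite {xs. set xs \<subseteq> {0..n} \<and> length xs = k}"
    by (rule finite_lists_length_eq) simp
qed

lemma replicate_append_mem_compositions:
  assumes "0 < a"
  shows "replicate m a @ z \<in> compositions n k \<longleftrightarrow>
    m * a \<le> n \<and> m \<le> k \<and> z \<in> compositions (n - m * a) (k - m)"
proof -
  have "(\<forall>x\<in>set (replicate m a @ z). 0 < x) \<longleftrightarrow> (\<forall>x\<in>set z. 0 < x)"
    using assms by auto
  then show ?thesis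
    unfolding compositions_def mem_Collect_eq by (simp add: sum_list_replicate) linarith
qed

lemma Cons_mem_compositions:
  "0 < a \<Longrightarrow>
    a # w \<in> compositions n k \<longleftrightarrow> a \<le> n \<and> 1 \<le> k \<and> w \<in> compositions (n - a) (k - 1)"
  using replicate_append_mem_compositions[of a 1 w n k] by simp

definition short_run_comps :: "nat \<Rightarrow> nat \<Rightarrow> nat \<Rightarrow> nat list set" where
  "short_run_comps r n k = {xs \<in> compositions n k. short_runs r xs}"

definition short_run_comps_from :: "nat \<Rightarrow> nat \<Rightarrow> nat \<Rightarrow> nat \<Rightarrow> nat list set" where
  "short_run_comps_from r a n k = {xs \<in> short_run_comps r n k. xs \<noteq> [] \<and> hd xs = a}"

lemma C_eq_card_short_run_comps: "C n k r = card (short_run_comps r n k)"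
  by (simp add: C_def short_run_comps_def short_runs_def)

lemma finite_short_run_comps: "finite (short_run_comps r n k)"
  by (simp add: short_run_comps_def finite_compositions)

definition C_from :: "nat \<Rightarrow> nat \<Rightarrow> nat \<Rightarrow> nat \<Rightarrow> nat" where
  "C_from a n k r = card (short_run_comps_from r a n k)"

lemma C_eq_sum_first_part:
  "C n k r = (if n = 0 \<and> k = 0 then 1 else 0) + (\<Sum>a=1..n. C_from a n k r)"
proof (cases "n = 0 \<and> k = 0")
  case True
  then have "short_run_comps r n k = {[]}"
    by (auto simp: short_run_comps_def compositions_def short_runs_def)
  then show ?thesis using True by (simp add: C_eq_card_short_run_comps)
next
  case False
  have "short_run_comps r n k = (\<Union>a\<in>{1..n}. short_run_comps_from r a n k)"
  proof (intro equalityI subsetI)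
    fix xs assume xs: "xs \<in> short_run_comps r n k"
    with False have "xs \<noteq> []" by (auto simp: short_run_comps_def compositions_def)
    moreover from this have "0 < hd xs" "hd xs \<le> n"
      using xs by (auto simp: short_run_comps_def compositions_def member_le_sum_list)
    ultimately show "xs \<in> (\<Union>a\<in>{1..n}. short_run_comps_from r a n k)"
      using xs by (auto simp: short_run_comps_from_def)
  qed (auto simp: short_run_comps_from_def)
  then have "card (short_run_comps r n k) = (\<Sum>a=1..n. card (short_run_comps_from r a n k))"
    by (simp only:)
      (intro card_UN_disjoint; auto simp: short_run_comps_from_def finite_short_run_comps)
  with False show ?thesis by (simp add: C_eq_card_short_run_comps C_from_def)
qed

lemma short_run_comps_from_eq_image_Cons:
  assumes "0 < a"
  shows "short_run_comps_from r a n k =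
    (#) a `
      {w \<in> short_run_comps r (n - a) (k - 1). Suc (lead_run a w) < r \<and> a \<le> n \<and> 1 \<le> k}"
  using assms
  by (auto simp: short_run_comps_from_def short_run_comps_def Cons_mem_compositions short_runs_Cons
      neq_Nil_conv)

lemma full_lead_run_eq_image_replicate_append:
  assumes "0 < a" "1 \<le> r" "a \<le> n" "1 \<le> k"
  shows "{w \<in> short_run_comps r (n - a) (k - 1). \<not> Suc (lead_run a w) < r} =
    (\<lambda>z. replicate (r - 1) a @ z) `
      {z \<in> short_run_comps r (n - r * a) (k - r).
        (z = [] \<or> hd z \<noteq> a) \<and> r * a \<le> n \<and> r \<le> k}"
proof -
  obtain s where r: "r = Suc s" using assms(2) by (cases r) auto
  have "replicate (r - 1) a @ z \<in> compositions (n - a) (k - 1) \<longleftrightarrow>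
      r * a \<le> n \<and> r \<le> k \<and> z \<in> compositions (n - r * a) (k - r)" for z
    using assms by (simp add: replicate_append_mem_compositions r diff_diff_add) linarith
  then show ?thesis
    using short_runs_full_lead_run[OF assms(2), of _ a]
    by (auto simp: short_run_comps_def)
qed

lemma C_from_le_C: "C_from a n k r \<le> C n k r"
  unfolding C_from_def C_eq_card_short_run_comps
  by (rule card_mono[OF finite_short_run_comps]) (auto simp: short_run_comps_from_def)

lemma C_from_rec:
  assumes "0 < a" "1 \<le> r" "a \<le> n" "1 \<le> k"
  shows "C (n - a) (k - 1) r = C_from a n k r +
    (if r * a \<le> n \<and> r \<le> k
     then C (n - r * a) (k - r) r - C_from a (n - r * a) (k - r) r else 0)"
proof -
  let ?A = "short_run_comps r (n - a) (k - 1)"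
  let ?P = "\<lambda>w. Suc (lead_run a w) < r"
  have "C (n - a) (k - 1) r = card {w \<in> ?A. ?P w} + card {w \<in> ?A. \<not> ?P w}"
    unfolding C_eq_card_short_run_comps
    by (subst card_Un_disjoint[symmetric])
      (auto simp: finite_short_run_comps intro: arg_cong[where f=card])
  also have "card {w \<in> ?A. ?P w} = C_from a n k r"
    unfolding C_from_def short_run_comps_from_eq_image_Cons[OF assms(1)]
    using assms(3,4) by (subst card_image) auto
  also have "card {w \<in> ?A. \<not> ?P w} =
      card {z \<in> short_run_comps r (n - r * a) (k - r).
        (z = [] \<or> hd z \<noteq> a) \<and> r * a \<le> n \<and> r \<le> k}"
    unfolding full_lead_run_eq_image_replicate_append[OF assms]
    by (rule card_image) (simp add: inj_on_def)
  also have "\<dots> = (if r * a \<le> n \<and> r \<le> k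
      then C (n - r * a) (k - r) r - C_from a (n - r * a) (k - r) r else 0)"
  proof -
    have "{z \<in> short_run_comps r m l. z = [] \<or> hd z \<noteq> a} =
        short_run_comps r m l - short_run_comps_from r a m l" for m l
      by (auto simp: short_run_comps_from_def)
    then show ?thesis
      unfolding C_eq_card_short_run_comps C_from_def
      by (auto intro!: card_Diff_subset simp: finite_short_run_comps short_run_comps_from_def)
  qed
  finally show ?thesis .
qed

lemma C_from_eq_0:
  assumes "\<not> (a \<le> n \<and> 1 \<le> k)"
  shows "C_from a n k r = 0"
proof -
  have "short_run_comps_from r a n k = {}"
    using assms by (auto simp: short_run_comps_from_def short_run_comps_def compositions_def
        neq_Nil_conv)
  then show ?thesis by (simp add: C_from_def)
qed

lemma of_nat_C_from_rec:
  assumes "0 < a" "1 \<le> r"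
  shows "(of_nat (C_from a n k r) :: 'b::ring_1) =
    (if a \<le> n \<and> 1 \<le> k then of_nat (C (n - a) (k - 1) r) else 0) -
    (if r * a \<le> n \<and> r \<le> k
     then of_nat (C (n - r * a) (k - r) r) - of_nat (C_from a (n - r * a) (k - r) r) else 0)"
proof (cases "a \<le> n \<and> 1 \<le> k")
  case True
  then show ?thesis
    using C_from_rec[OF assms] C_from_le_C[of a "n - r * a" "k - r" r] by (auto simp: of_nat_diff)
next
  case False
  have "a \<le> r * a" using assms(2) by simp
  then have no_full_run: "\<not> (r * a \<le> n \<and> r \<le> k)" using False assms(2) by linarith
  show ?thesis
    unfolding if_not_P[OF False] if_not_P[OF no_full_run] C_from_eq_0[OF False] by simp
qed

definition fps_order_gt_index :: "(nat \<Rightarrow> 'a::zero fps) \<Rightarrow> bool" where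
  "fps_order_gt_index f \<longleftrightarrow> (\<forall>j n. n \<le> j \<longrightarrow> f j $ n = 0)"

lemma fps_order_gt_indexI:
  "(\<And>j n. n \<le> j \<Longrightarrow> f j $ n = 0) \<Longrightarrow> fps_order_gt_index f"
  by (simp add: fps_order_gt_index_def)

lemma fps_order_gt_index_sums:
  fixes f :: "nat \<Rightarrow> 'a::comm_ring_1 fps"
  assumes "fps_order_gt_index f"
  shows "f sums Abs_fps (\<lambda>n. \<Sum>j<n. f j $ n)"
  unfolding sums_def
proof (rule tendsto_fpsI)
  fix n
  have "(\<Sum>j<N. f j) $ n = (\<Sum>j<n. f j $ n)" if "n \<le> N" for N
    unfolding fps_sum_nth
    by (rule sum.mono_neutral_right) (use that assms in \<open>auto simp: fps_order_gt_index_def\<close>)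
  then show "eventually (\<lambda>N. (\<Sum>j<N. f j) $ n = Abs_fps (\<lambda>n. \<Sum>j<n. f j $ n) $ n) sequentially"
    unfolding eventually_sequentially by auto
qed

lemma fps_order_gt_index_suminf_nth:
  fixes f :: "nat \<Rightarrow> 'a::comm_ring_1 fps"
  assumes "fps_order_gt_index f"
  shows "suminf f $ n = (\<Sum>j<n. f j $ n)"
  by (simp add: sums_unique[OF fps_order_gt_index_sums[OF assms], symmetric])

lemma fps_order_gt_index_mult:
  fixes f :: "nat \<Rightarrow> 'a::comm_ring_1 fps"
  assumes "fps_order_gt_index f"
  shows "fps_order_gt_index (\<lambda>j. g j * f j)" and "fps_order_gt_index (\<lambda>j. f j * g j)"
  using assms by (auto simp: fps_order_gt_index_def fps_mult_nth intro!: sum.neutral)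

lemma fps_order_gt_index_diff:
  fixes f g :: "nat \<Rightarrow> 'a::group_add fps"
  shows "fps_order_gt_index f \<Longrightarrow> fps_order_gt_index g \<Longrightarrow> fps_order_gt_index (\<lambda>j. f j - g j)"
  by (simp add: fps_order_gt_index_def)

lemma fps_order_gt_index_X_power:
  assumes "\<And>j. j < m j"
  shows "fps_order_gt_index (\<lambda>j. fps_X ^ m j :: 'a::comm_ring_1 fps)"
proof (rule fps_order_gt_indexI)
  fix j n :: nat
  assume "n \<le> j"
  with assms[of j] show "(fps_X ^ m j :: 'a fps) $ n = 0" by (simp add: fps_X_power_nth)
qed

lemma suminf_mult_left_fps:
  fixes f :: "nat \<Rightarrow> 'a::comm_ring_1 fps"
  assumes "fps_order_gt_index f"
  shows "c * suminf f = (\<Sum>j. c * f j)"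
proof (rule fps_ext)
  fix n
  have "(c * suminf f) $ n = (\<Sum>i=0..n. c $ i * (\<Sum>j<n - i. f j $ (n - i)))"
    by (simp add: fps_mult_nth fps_order_gt_index_suminf_nth[OF assms])
  also have "\<dots> = (\<Sum>i=0..n. c $ i * (\<Sum>j<n. f j $ (n - i)))"
    using assms
    by (intro sum.cong refl arg_cong2[where f="(*)"] sum.mono_neutral_left)
      (auto simp: fps_order_gt_index_def)
  also have "\<dots> = (\<Sum>j<n. \<Sum>i=0..n. c $ i * f j $ (n - i))"
    by (simp add: sum_distrib_left sum.swap[where A="{0..n}"])
  also have "\<dots> = (\<Sum>j. c * f j) $ n"
    by (simp add: fps_order_gt_index_suminf_nth[OF fps_order_gt_index_mult(1)[OF assms]] fps_mult_nth)
  finally show "(c * suminf f) $ n = (\<Sum>j. c * f j) $ n" .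
qed

lemma suminf_diff_fps:
  fixes f g :: "nat \<Rightarrow> 'a::comm_ring_1 fps"
  assumes "fps_order_gt_index f" "fps_order_gt_index g"
  shows "suminf f - suminf g = (\<Sum>j. f j - g j)"
  by (rule fps_ext)
    (simp add: fps_order_gt_index_suminf_nth assms fps_order_gt_index_diff sum_subtractf)

definition biv :: "(nat \<Rightarrow> nat \<Rightarrow> 'a::zero) \<Rightarrow> 'a fls fps" where
  "biv F = Abs_fps (\<lambda>n. Abs_fls (\<lambda>k. if 0 \<le> k then F n (nat k) else 0))"

lemma fls_nth_biv: "fls_nth (biv F $ n) k = (if 0 \<le> k then F n (nat k) else 0)"
proof -
  have "\<forall>\<^sub>\<infinity>m::nat. (\<lambda>k. if 0 \<le> k then F n (nat k) else 0) (- int m) = 0"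
    by (rule MOST_nat[THEN iffD2]) (rule exI[of _ 0], auto)
  then show ?thesis by (simp add: biv_def)
qed

lemma GF_eq_biv: "GF r = biv (\<lambda>n k. of_nat (C n k r))"
  by (simp add: GF_def biv_def)

lemma qq_power_xx_power_mult_nth:
  "(qq ^ j * xx ^ m * F) $ n = (if n < m then 0 else fls_X ^ j * F $ (n - m))"
  by (simp add: qq_def xx_def fps_const_power mult.assoc fps_X_power_mult_nth)

lemma fls_nth_qq_power_xx_power_mult:
  "fls_nth ((qq ^ j * xx ^ m * F) $ n) k =
    (if n < m then 0 else fls_nth (F $ (n - m)) (k - int j))"
  by (simp add: qq_power_xx_power_mult_nth fls_X_power_times_conv_shift)

lemma qq_power_xx_power_nth: "(qq ^ j * xx ^ m) $ n = (if n = m then fls_X ^ j else 0)"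
  by (simp add: qq_def xx_def fps_const_power fps_X_power_mult_right_nth)

definition GF_from :: "nat \<Rightarrow> nat \<Rightarrow> rat fls fps" where
  "GF_from r a = biv (\<lambda>n k. of_nat (C_from a n k r))"

lemma GF_from_eq:
  assumes "0 < a" "1 \<le> r"
  shows "GF_from r a = qq * xx ^ a * GF r - qq ^ r * xx ^ (r * a) * (GF r - GF_from r a)"
proof (intro fps_ext fls_eqI)
  fix n and k :: int
  have "qq * xx ^ a * F = qq ^ 1 * xx ^ a * F" for F by simp
  note coeffs = this fps_sub_nth fls_minus_nth fls_nth_qq_power_xx_power_mult
    GF_eq_biv GF_from_def fls_nth_biv
  show "fls_nth (GF_from r a $ n) k =
      fls_nth ((qq * xx ^ a * GF r - qq ^ r * xx ^ (r * a) * (GF r - GF_from r a)) $ n) k"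
  proof (cases "0 \<le> k")
    case False
    then show ?thesis unfolding coeffs by simp
  next
    case True
    then obtain m where k: "k = int m" by (metis nonneg_int_cases)
    have "nat (int m - int j) = m - j" and "0 \<le> int m - int j \<longleftrightarrow> j \<le> m" for j
      by auto
    note shift = this
    show ?thesis
      unfolding coeffs k shift
      using of_nat_C_from_rec[OF assms, of n m, where 'b=rat] assms by (auto simp: not_less)
  qed
qed

lemma inverse_one_minus_monomial_mult:
  "0 < m \<Longrightarrow> inverse (1 - qq ^ j * xx ^ m) * (1 - qq ^ j * xx ^ m) = 1"
  by (rule inverse_mult_eq_1) (simp add: xx_def)

definition part_factor :: "nat \<Rightarrow> nat \<Rightarrow> rat fls fps" where
  "part_factor r a = (qq * xx ^ a - qq ^ r * xx ^ (r * a)) * inverse (1 - qq ^ r * xx ^ (r * a))"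

lemma GF_from_eq_part_factor_mult:
  assumes "0 < a" "1 \<le> r"
  shows "GF_from r a = part_factor r a * GF r"
proof -
  let ?P = "qq ^ r * xx ^ (r * a)"
  have "GF_from r a = (inverse (1 - ?P) * (1 - ?P)) * GF_from r a"
    using assms by (simp add: inverse_one_minus_monomial_mult)
  also have "\<dots> = inverse (1 - ?P) * ((1 - ?P) * GF_from r a)"
    by (rule mult.assoc)
  also have "(1 - ?P) * GF_from r a = (qq * xx ^ a - ?P) * GF r"
    using GF_from_eq[OF assms] by (simp add: algebra_simps)
  finally show ?thesis
    by (simp add: part_factor_def mult_ac)
qed

lemma fps_order_gt_index_xx_power_mult:
  assumes "\<And>j. j < m j"
  shows "fps_order_gt_index (\<lambda>j. g j * xx ^ m j)"
    and "fps_order_gt_index (\<lambda>j. xx ^ m j * g j)"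
  unfolding xx_def using fps_order_gt_index_X_power[OF assms] by (rule fps_order_gt_index_mult)+

lemma less_mult_Suc: "1 \<le> r \<Longrightarrow> j < r * Suc j"
  using mult_le_mono1[of 1 r "Suc j"] by simp

lemma fps_order_gt_index_GF_from: "fps_order_gt_index (\<lambda>j. GF_from r (Suc j))"
proof (rule fps_order_gt_indexI)
  fix j n :: nat
  assume "n \<le> j"
  then show "GF_from r (Suc j) $ n = 0"
    by (intro fls_eqI) (simp add: GF_from_def fls_nth_biv C_from_eq_0)
qed

lemma fps_order_gt_index_part_factor:
  assumes "1 \<le> r"
  shows "fps_order_gt_index (\<lambda>j. part_factor r (Suc j))"
  unfolding part_factor_def using less_mult_Suc[OF assms]
  by (intro fps_order_gt_index_mult(2) fps_order_gt_index_diff fps_order_gt_index_xx_power_mult(1))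
    auto

lemma GF_eq_one_plus_suminf_GF_from: "GF r = 1 + (\<Sum>j. GF_from r (Suc j))"
proof (intro fps_ext fls_eqI)
  fix n and k :: int
  have "(of_nat (C n (nat k) r) :: rat) =
      (if n = 0 \<and> nat k = 0 then 1 else 0) + (\<Sum>j<n. of_nat (C_from (Suc j) n (nat k) r))"
    using sum_bounds_lt_plus1[of "\<lambda>a. of_nat (C_from a n (nat k) r) :: rat" n]
    by (subst C_eq_sum_first_part) simp
  then show "fls_nth (GF r $ n) k = fls_nth ((1 + (\<Sum>j. GF_from r (Suc j))) $ n) k"
    unfolding fps_add_nth fls_plus_nth fps_order_gt_index_suminf_nth[OF fps_order_gt_index_GF_from]
    by (simp add: fls_nth_sum GF_eq_biv GF_from_def fls_nth_biv fps_one_nth)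
qed

lemma xx_qq_mult_inverse_one_minus_xx: "xx * qq * inverse (1 - xx) = (\<Sum>j. qq * xx ^ Suc j)"
proof (rule fps_ext)
  fix n
  have "inverse (1 - xx) = inverse (inverse (Abs_fps (\<lambda>_. 1 :: rat fls)))"
    by (simp add: fps_inverse_gp' xx_def)
  also have "\<dots> = Abs_fps (\<lambda>_. 1)"
    by (rule fps_inverse_idempotent) simp
  finally have geometric: "xx * qq * inverse (1 - xx) = qq ^ 1 * xx ^ 1 * Abs_fps (\<lambda>_. 1)"
    by (simp add: mult_ac)
  have "(xx * qq * inverse (1 - xx)) $ n = (if n = 0 then 0 else fls_X)"
    unfolding geometric qq_power_xx_power_mult_nth by simp
  moreover have "fps_order_gt_index (\<lambda>j. qq * xx ^ Suc j)"
    by (rule fps_order_gt_index_xx_power_mult) simp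
  moreover have "(qq * xx ^ m) $ n = (if n = m then fls_X else 0)" for m
    using qq_power_xx_power_nth[of 1 m n] by simp
  ultimately show "(xx * qq * inverse (1 - xx)) $ n = (\<Sum>j. qq * xx ^ Suc j) $ n"
    by (simp only: fps_order_gt_index_suminf_nth) (cases n; simp)
qed

lemma Den_eq_one_minus_suminf_part_factor:
  assumes "1 \<le> r"
  shows "Den r = 1 - (\<Sum>j. part_factor r (Suc j))"
proof -
  define D where "D = (\<lambda>j.
    xx ^ (r * Suc j) * (1 - qq * xx ^ Suc j) * inverse (1 - qq ^ r * xx ^ (r * Suc j)))"
  have order_D: "fps_order_gt_index D"
    unfolding D_def using less_mult_Suc[OF assms]
    by (intro fps_order_gt_index_mult(2) fps_order_gt_index_xx_power_mult(2))
  have order_T: "fps_order_gt_index (\<lambda>j. qq * xx ^ Suc j)"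
    by (rule fps_order_gt_index_xx_power_mult) simp
  have D_eq: "qq ^ r * D j = qq * xx ^ Suc j - part_factor r (Suc j)" for j
  proof -
    let ?T = "qq * xx ^ Suc j" and ?P = "qq ^ r * xx ^ (r * Suc j)"
    have "?T = ?T * (inverse (1 - ?P) * (1 - ?P))"
      using assms by (simp add: inverse_one_minus_monomial_mult)
    then show ?thesis
      unfolding D_def part_factor_def by (simp add: algebra_simps)
  qed
  have "qq ^ r * suminf D = (\<Sum>j. qq ^ r * D j)"
    by (rule suminf_mult_left_fps[OF order_D])
  also have "\<dots> = (\<Sum>j. qq * xx ^ Suc j - part_factor r (Suc j))"
    by (simp only: D_eq)
  also have "\<dots> = (\<Sum>j. qq * xx ^ Suc j) - (\<Sum>j. part_factor r (Suc j))"
    by (rule suminf_diff_fps[OF order_T fps_order_gt_index_part_factor[OF assms], symmetric])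
  finally have "qq ^ r * suminf D = (\<Sum>j. qq * xx ^ Suc j) - (\<Sum>j. part_factor r (Suc j))" .
  then show ?thesis
    unfolding Den_def D_def[symmetric] xx_qq_mult_inverse_one_minus_xx by simp
qed

theorem theorem3:
  fixes r :: nat
  assumes "1 \<le> r"
  shows "GF r = inverse (Den r)"
proof -
  have "Den r * GF r = GF r - (\<Sum>j. part_factor r (Suc j)) * GF r"
    by (simp add: Den_eq_one_minus_suminf_part_factor[OF assms] algebra_simps)
  also have "(\<Sum>j. part_factor r (Suc j)) * GF r = (\<Sum>j. GF_from r (Suc j))"
    using suminf_mult_left_fps[OF fps_order_gt_index_part_factor[OF assms], of "GF r"]
    by (simp add: GF_from_eq_part_factor_mult[OF _ assms] mult.commute)
  also have "GF r - (\<Sum>j. GF_from r (Suc j)) = 1"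
    using GF_eq_one_plus_suminf_GF_from[of r] by simp
  finally show ?thesis
    by (rule fps_inverse_unique[symmetric])
qed

end
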